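(* Let $p\in(1,\infty)$, $q=p/(p-1)$, $R_0\in\mathbb{R}^{\mathcal{S}\times\mathcal{A}}$, $\alpha>0$ and $\mathcal{R}_p=\{R:\|R-R_0\|_p\le\alpha\}$. Fix a stationary policy $\pi\in\Pi$ and define the operator on $\mathbb{R}^{\mathcal{S}}$ $$[\mathcal{T}^{\pi,\mathrm{reg}}_{\mathcal{R}_p}v](s)=(\mathcal{T}^\pi_{R_0}v)(s)-\alpha\,\frac{\sum_a\pi_s(a)\,d^\pi(s,a)^{q-1}}{\|d^\pi\|_q^{q-1}},\qquad s\in\mathcal{S}.$$ Then for any $v_0\in\mathbb{R}^{\mathcal{S}}$ the sequence $v_{n+1}=\mathcal{T}^{\pi,\mathrm{reg}}_{\mathcal{R}_p}v_n$ converges linearly to the robust value function $v^\pi_{\mathcal{R}_p}$.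
   Context: Finite MDP with finite state space $\mathcal{S}$, finite action space $\mathcal{A}$, transition kernel $P$, discount $\gamma\in[0,1)$, initial distribution $\mu$ with $\mu(s)>0$ for all $s$. $\Pi$: stationary randomized policies, $\pi_s(a)=\pi(a|s)$; $R^\pi(s)=\sum_a\pi_s(a)R(s,a)$, $P^\pi(s'|s)=\sum_a\pi_s(a)P(s'|s,a)$; $(\mathcal{T}^\pi_Rv)(s)=R^\pi(s)+\gamma\sum_{s'}P^\pi(s'|s)v(s')$; $v^\pi_R=(I-\gamma P^\pi)^{-1}R^\pi$. Occupancy: $d^\pi=\mu^\top(I-\gamma P^\pi)^{-1}$, $d^\pi(s,a)=d^\pi(s)\pi_s(a)$, $\|d^\pi\|_q$ the $L_q$ norm over $\mathcal{S}\times\mathcal{A}$. Return $\rho^\pi_R=\sum_{s,a}d^\pi(s,a)R(s,a)$. The worst-case reward $R^\pi_p$ is the (unique) minimizer of $R\mapsto\rho^\pi_R$ over $\mathcal{R}_p$, and the robust value function is $v^\pi_{\mathcal{R}_p}:=v^\pi_{R^\pi_p}$. *)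

theory Defs
  imports "HOL-Analysis.Analysis"
begin

(* Finite MDP: states 's::finite, actions 'a::finite.
   P s a s' = P(s'|s,a);  pol s a = pi(a|s);  rewards R s a. *)

definition reward_pol :: "('s::finite \<Rightarrow> 'a::finite \<Rightarrow> real) \<Rightarrow> ('s \<Rightarrow> 'a \<Rightarrow> real) \<Rightarrow> real^'s" where
  "reward_pol pol R = (\<chi> s. \<Sum>a\<in>UNIV. pol s a * R s a)"

definition trans_pol :: "('s::finite \<Rightarrow> 'a::finite \<Rightarrow> real) \<Rightarrow> ('s \<Rightarrow> 'a \<Rightarrow> 's \<Rightarrow> real) \<Rightarrow> real^'s^'s" where
  "trans_pol pol P = (\<chi> s s'. \<Sum>a\<in>UNIV. pol s a * P s a s')"

definition bellman :: "real \<Rightarrow> ('s::finite \<Rightarrow> 'a::finite \<Rightarrow> 's \<Rightarrow> real) \<Rightarrow> ('s \<Rightarrow> 'a \<Rightarrow> real)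
    \<Rightarrow> ('s \<Rightarrow> 'a \<Rightarrow> real) \<Rightarrow> real^'s \<Rightarrow> real^'s" where
  "bellman \<gamma> P pol R v = reward_pol pol R + \<gamma> *\<^sub>R (trans_pol pol P *v v)"

definition value_fun :: "real \<Rightarrow> ('s::finite \<Rightarrow> 'a::finite \<Rightarrow> 's \<Rightarrow> real) \<Rightarrow> ('s \<Rightarrow> 'a \<Rightarrow> real)
    \<Rightarrow> ('s \<Rightarrow> 'a \<Rightarrow> real) \<Rightarrow> real^'s" where
  "value_fun \<gamma> P pol R = matrix_inv (mat 1 - \<gamma> *\<^sub>R trans_pol pol P) *v reward_pol pol R"

definition occ_state :: "real \<Rightarrow> ('s::finite \<Rightarrow> 'a::finite \<Rightarrow> 's \<Rightarrow> real) \<Rightarrow> ('s \<Rightarrow> real)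
    \<Rightarrow> ('s \<Rightarrow> 'a \<Rightarrow> real) \<Rightarrow> real^'s" where
  "occ_state \<gamma> P \<mu> pol = (\<chi> s. \<mu> s) v* matrix_inv (mat 1 - \<gamma> *\<^sub>R trans_pol pol P)"

definition occ :: "real \<Rightarrow> ('s::finite \<Rightarrow> 'a::finite \<Rightarrow> 's \<Rightarrow> real) \<Rightarrow> ('s \<Rightarrow> real)
    \<Rightarrow> ('s \<Rightarrow> 'a \<Rightarrow> real) \<Rightarrow> 's \<Rightarrow> 'a \<Rightarrow> real" where
  "occ \<gamma> P \<mu> pol s a = occ_state \<gamma> P \<mu> pol $ s * pol s a"

definition ret :: "real \<Rightarrow> ('s::finite \<Rightarrow> 'a::finite \<Rightarrow> 's \<Rightarrow> real) \<Rightarrow> ('s \<Rightarrow> real)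
    \<Rightarrow> ('s \<Rightarrow> 'a \<Rightarrow> real) \<Rightarrow> ('s \<Rightarrow> 'a \<Rightarrow> real) \<Rightarrow> real" where
  "ret \<gamma> P \<mu> pol R = (\<Sum>s\<in>UNIV. \<Sum>a\<in>UNIV. occ \<gamma> P \<mu> pol s a * R s a)"

definition lpnorm :: "real \<Rightarrow> ('s::finite \<Rightarrow> 'a::finite \<Rightarrow> real) \<Rightarrow> real" where
  "lpnorm p f = (\<Sum>s\<in>UNIV. \<Sum>a\<in>UNIV. \<bar>f s a\<bar> powr p) powr (1 / p)"

definition Rball :: "real \<Rightarrow> ('s::finite \<Rightarrow> 'a::finite \<Rightarrow> real) \<Rightarrow> real \<Rightarrow> ('s \<Rightarrow> 'a \<Rightarrow> real) set" where
  "Rball p R0 \<alpha> = {R. lpnorm p (\<lambda>s a. R s a - R0 s a) \<le> \<alpha>}"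

(* worst-case reward: the (unique) minimizer of R |-> rho^pi_R over R_p *)
definition worst_reward :: "real \<Rightarrow> ('s::finite \<Rightarrow> 'a::finite \<Rightarrow> 's \<Rightarrow> real) \<Rightarrow> ('s \<Rightarrow> real)
    \<Rightarrow> ('s \<Rightarrow> 'a \<Rightarrow> real) \<Rightarrow> real \<Rightarrow> ('s \<Rightarrow> 'a \<Rightarrow> real) \<Rightarrow> real \<Rightarrow> ('s \<Rightarrow> 'a \<Rightarrow> real)" where
  "worst_reward \<gamma> P \<mu> pol p R0 \<alpha> =
     (THE R. R \<in> Rball p R0 \<alpha> \<and> (\<forall>R'\<in>Rball p R0 \<alpha>. ret \<gamma> P \<mu> pol R \<le> ret \<gamma> P \<mu> pol R'))"

definition robust_value :: "real \<Rightarrow> ('s::finite \<Rightarrow> 'a::finite \<Rightarrow> 's \<Rightarrow> real) \<Rightarrow> ('s \<Rightarrow> real)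
    \<Rightarrow> ('s \<Rightarrow> 'a \<Rightarrow> real) \<Rightarrow> real \<Rightarrow> ('s \<Rightarrow> 'a \<Rightarrow> real) \<Rightarrow> real \<Rightarrow> real^'s" where
  "robust_value \<gamma> P \<mu> pol p R0 \<alpha> = value_fun \<gamma> P pol (worst_reward \<gamma> P \<mu> pol p R0 \<alpha>)"

definition reg_bellman :: "real \<Rightarrow> ('s::finite \<Rightarrow> 'a::finite \<Rightarrow> 's \<Rightarrow> real) \<Rightarrow> ('s \<Rightarrow> real)
    \<Rightarrow> ('s \<Rightarrow> 'a \<Rightarrow> real) \<Rightarrow> real \<Rightarrow> ('s \<Rightarrow> 'a \<Rightarrow> real) \<Rightarrow> real \<Rightarrow> real^'s \<Rightarrow> real^'s" where
  "reg_bellman \<gamma> P \<mu> pol p R0 \<alpha> v =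
     (let q = p / (p - 1); d = occ \<gamma> P \<mu> pol in
      bellman \<gamma> P pol R0 v -
      (\<chi> s. \<alpha> * (\<Sum>a\<in>UNIV. pol s a * d s a powr (q - 1)) / lpnorm q d powr (q - 1)))"

definition supnorm :: "real^'s::finite \<Rightarrow> real" where
  "supnorm v = Max (range (\<lambda>s. \<bar>v $ s\<bar>))"

end

theory Submission
  imports Defs
begin

(* Write d for the occupancy measure d^pi, which is nonnegative and not identically zero.
   By Hoelder's inequality, sum d (R - R0) >= - alpha ||d||_q on the l_p-ball of radius alpha,
   and the equality case of Young's inequality shows that the bound is attained exactly at
   R - R0 = - alpha (d / ||d||_q)^(q-1).  So the worst-case reward is
   R0 - alpha d^(q-1) / ||d||_q^(q-1), and the regularized operator is the ordinary evaluation
   operator T^pi for this reward.  That operator is a gamma-contraction in the sup norm whose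
   fixed point is the robust value function, which gives linear convergence with rate gamma. *)

section \<open>Sup norm and stochastic matrices\<close>

lemma abs_component_le_supnorm: "\<bar>x $ i\<bar> \<le> supnorm x"
  unfolding supnorm_def by (rule Max_ge) auto

lemma supnorm_leI: "(\<And>i. \<bar>x $ i\<bar> \<le> c) \<Longrightarrow> supnorm x \<le> c"
  unfolding supnorm_def by (subst Max_le_iff) auto

lemma supnorm_nonneg: "0 \<le> supnorm x"
  using abs_component_le_supnorm[of x] abs_ge_zero order_trans by blast

lemma supnorm_eq_0_iff: "supnorm x = 0 \<longleftrightarrow> x = 0"
proof
  show "supnorm x = 0 \<Longrightarrow> x = 0"
    using abs_component_le_supnorm[of x] by (force simp: vec_eq_iff)
  show "x = 0 \<Longrightarrow> supnorm x = 0"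
    by (auto intro!: antisym supnorm_leI supnorm_nonneg)
qed

lemma supnorm_scaleR_le: "supnorm (c *\<^sub>R x) \<le> \<bar>c\<bar> * supnorm x"
  by (rule supnorm_leI) (simp add: abs_mult mult_left_mono abs_component_le_supnorm)

definition stochastic :: "real^'n^'m \<Rightarrow> bool" where
  "stochastic M \<longleftrightarrow> (\<forall>i j. 0 \<le> M $ i $ j) \<and> (\<forall>i. (\<Sum>j\<in>UNIV. M $ i $ j) = 1)"

lemma supnorm_stochastic_mult_le:
  assumes "stochastic M"
  shows "supnorm (M *v x) \<le> supnorm x"
proof (rule supnorm_leI)
  fix i
  have "\<bar>(M *v x) $ i\<bar> \<le> (\<Sum>j\<in>UNIV. M $ i $ j * \<bar>x $ j\<bar>)"
    using assms sum_abs[of "\<lambda>j. M $ i $ j * x $ j" UNIV]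
    by (simp add: matrix_vector_mult_def abs_mult stochastic_def)
  also have "\<dots> \<le> (\<Sum>j\<in>UNIV. M $ i $ j * supnorm x)"
    using assms by (intro sum_mono mult_left_mono abs_component_le_supnorm) (simp add: stochastic_def)
  also have "\<dots> = supnorm x"
    using assms by (simp add: stochastic_def flip: sum_distrib_right)
  finally show "\<bar>(M *v x) $ i\<bar> \<le> supnorm x" .
qed

lemma invertible_discounted_stochastic:
  fixes M :: "real^'n^'n"
  assumes "stochastic M" "0 \<le> \<gamma>" "\<gamma> < 1"
  shows "invertible (mat 1 - \<gamma> *\<^sub>R M)"
proof -
  have "x = 0" if "(mat 1 - \<gamma> *\<^sub>R M) *v x = 0" for x
  proof -
    from that have "supnorm x = supnorm (\<gamma> *\<^sub>R (M *v x))"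
      by (simp add: matrix_vector_mult_diff_rdistrib scaleR_matrix_vector_assoc)
    also have "supnorm (\<gamma> *\<^sub>R (M *v x)) \<le> \<gamma> * supnorm (M *v x)"
      using supnorm_scaleR_le[of \<gamma>] assms(2) by simp
    also have "\<dots> \<le> \<gamma> * supnorm x"
      using supnorm_stochastic_mult_le[OF assms(1)] assms(2) by (rule mult_left_mono)
    finally have "(1 - \<gamma>) * supnorm x \<le> 0"
      by (simp add: algebra_simps)
    then show "x = 0"
      using supnorm_nonneg[of x] assms(3) supnorm_eq_0_iff[of x]
      by (simp add: mult_le_0_iff)
  qed
  then show ?thesis
    using matrix_left_invertible_ker invertible_left_inverse by blast
qed

lemma matrix_inv_invertible:
  assumes "invertible A"
  shows "A ** matrix_inv A = mat 1" "matrix_inv A ** A = mat 1"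
  using someI_ex[OF assms[unfolded invertible_def]] unfolding matrix_inv_def by auto

lemma vector_matrix_discounted_eq:
  assumes "d v* (mat 1 - \<gamma> *\<^sub>R M) = m"
  shows "d $ j = m $ j + \<gamma> * (\<Sum>i\<in>UNIV. d $ i * M $ i $ j)"
proof -
  have "m $ j = (\<Sum>i\<in>UNIV. d $ i * mat 1 $ i $ j) - (\<Sum>i\<in>UNIV. \<gamma> * (d $ i * M $ i $ j))"
    using assms[symmetric]
    by (simp add: vector_matrix_mult_def right_diff_distrib sum_subtractf mult_ac)
  also have "(\<Sum>i\<in>UNIV. d $ i * mat 1 $ i $ j) = d $ j"
    using vector_matrix_mul_rid[of d] by (simp add: vector_matrix_mult_def vec_eq_iff)
  finally show ?thesis
    by (simp add: sum_distrib_left)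
qed

lemma nonneg_of_discounted_left_fixpoint:
  fixes M :: "real^'n^'n"
  assumes M: "stochastic M" and \<gamma>: "0 \<le> \<gamma>" "\<gamma> < 1" and m_nonneg: "\<And>j. 0 \<le> m $ j"
    and fix_eq: "\<And>j. d $ j = m $ j + \<gamma> * (\<Sum>i\<in>UNIV. d $ i * M $ i $ j)"
  shows "0 \<le> d $ j"
proof -
  have M_nonneg: "0 \<le> M $ i $ j" and M_rows: "(\<Sum>j\<in>UNIV. M $ i $ j) = 1" for i j
    using M by (auto simp: stochastic_def)
  \<comment> \<open>The negative part \<open>e\<close> of \<open>d\<close> satisfies \<open>\<gamma> e M \<le> e\<close>; summing over the columns,
    which preserves total mass since the rows of \<open>M\<close> sum to 1, forces \<open>e = 0\<close>.\<close>
  define e where "e j = min (d $ j) 0" for j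
  have e_nonpos: "e j \<le> 0" for j
    by (simp add: e_def)
  have e_super: "\<gamma> * (\<Sum>i\<in>UNIV. e i * M $ i $ j) \<le> e j" for j
  proof -
    have "(\<Sum>i\<in>UNIV. e i * M $ i $ j) \<le> 0"
      by (intro sum_nonpos mult_nonpos_nonneg e_nonpos M_nonneg)
    then have nonpos: "\<gamma> * (\<Sum>i\<in>UNIV. e i * M $ i $ j) \<le> 0"
      using \<gamma>(1) by (rule mult_nonneg_nonpos[rotated])
    have "(\<Sum>i\<in>UNIV. e i * M $ i $ j) \<le> (\<Sum>i\<in>UNIV. d $ i * M $ i $ j)"
      by (intro sum_mono mult_right_mono M_nonneg) (simp add: e_def)
    then have "\<gamma> * (\<Sum>i\<in>UNIV. e i * M $ i $ j) \<le> d $ j"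
      using fix_eq[of j] m_nonneg[of j] mult_left_mono[OF _ \<gamma>(1)] by fastforce
    with nonpos show ?thesis
      by (simp add: e_def)
  qed
  have "\<gamma> * (\<Sum>i\<in>UNIV. e i) = \<gamma> * (\<Sum>i\<in>UNIV. e i * (\<Sum>j\<in>UNIV. M $ i $ j))"
    by (simp add: M_rows)
  also have "\<dots> = (\<Sum>j\<in>UNIV. \<gamma> * (\<Sum>i\<in>UNIV. e i * M $ i $ j))"
    by (simp add: sum_distrib_left mult.assoc) (rule sum.swap)
  also have "\<dots> \<le> (\<Sum>j\<in>UNIV. e j)"
    by (intro sum_mono e_super)
  finally have "(1 - \<gamma>) * (\<Sum>j\<in>UNIV. e j) \<ge> 0"
    by (simp add: algebra_simps)
  then have "0 \<le> (\<Sum>j\<in>UNIV. e j)"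
    using \<gamma>(2) by (simp add: zero_le_mult_iff)
  then have "(\<Sum>j\<in>UNIV. - e j) = 0"
    using sum_nonpos[of UNIV e] e_nonpos by (simp add: sum_negf)
  then have "e j = 0"
    using sum_nonneg_eq_0_iff[of UNIV "\<lambda>j. - e j"] e_nonpos by simp
  then show ?thesis
    by (simp add: e_def)
qed

lemma discounted_left_solution_ge:
  fixes M :: "real^'n^'n"
  assumes M: "stochastic M" and \<gamma>: "0 \<le> \<gamma>" "\<gamma> < 1"
    and sol: "d v* (mat 1 - \<gamma> *\<^sub>R M) = m" and m_nonneg: "\<And>j. 0 \<le> m $ j"
  shows "m $ j \<le> d $ j"
proof -
  note fix_eq = vector_matrix_discounted_eq[OF sol]
  have "0 \<le> d $ i" for i
    using nonneg_of_discounted_left_fixpoint[OF M \<gamma> m_nonneg fix_eq] .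
  then have "0 \<le> (\<Sum>i\<in>UNIV. d $ i * M $ i $ j)"
    using M by (intro sum_nonneg mult_nonneg_nonneg) (auto simp: stochastic_def)
  then show ?thesis
    using fix_eq[of j] \<gamma>(1) by simp
qed

lemma tendsto_of_supnorm_contraction:
  assumes c: "0 \<le> c" "c < 1" and contr: "\<And>n. supnorm (v (Suc n) - V) \<le> c * supnorm (v n - V)"
  shows "v \<longlonglongrightarrow> V"
proof -
  have geometric: "supnorm (v n - V) \<le> c ^ n * supnorm (v 0 - V)" for n
  proof (induction n)
    case (Suc n)
    have "supnorm (v (Suc n) - V) \<le> c * supnorm (v n - V)"
      by (rule contr)
    also have "\<dots> \<le> c * (c ^ n * supnorm (v 0 - V))"
      using Suc.IH c(1) by (rule mult_left_mono)
    finally show ?case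
      by (simp add: mult.assoc)
  qed simp
  have geometric_lim: "(\<lambda>n. c ^ n * supnorm (v 0 - V)) \<longlonglongrightarrow> 0"
    using c by (intro tendsto_mult_left_zero LIMSEQ_power_zero) simp
  have components: "(\<lambda>n. v n $ i - V $ i) \<longlonglongrightarrow> 0" for i
  proof (rule Lim_null_comparison[OF always_eventually geometric_lim])
    show "\<forall>n. norm (v n $ i - V $ i) \<le> c ^ n * supnorm (v 0 - V)"
      using abs_component_le_supnorm[of "v _ - V" i] geometric by (auto intro: order_trans)
  qed
  show ?thesis
    by (rule vec_tendstoI, rule LIM_zero_cancel, rule components)
qed

section \<open>Hoelder's inequality and linear functionals on l_p-balls\<close>

lemma ln_convex_combination_less:
  fixes t u v :: real
  assumes t: "0 < t" "t < 1" and uv: "0 < u" "0 < v" "u \<noteq> v"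
  shows "t * ln u + (1 - t) * ln v < ln (t * u + (1 - t) * v)"
proof -
  define M where "M = t * u + (1 - t) * v"
  have M: "0 < M"
    using t uv by (simp add: M_def add_pos_pos)
  have tangent: "ln x \<le> ln M + (x - M) / M" and tangent_less: "x \<noteq> M \<Longrightarrow> ln x < ln M + (x - M) / M"
    if "0 < x" for x
    using ln_diff_le[OF that M] ln_diff_less[OF that M] by simp_all
  have "u \<noteq> M \<or> v \<noteq> M"
    using uv(3) t by (auto simp: M_def algebra_simps)
  then have "t * ln u + (1 - t) * ln v < t * (ln M + (u - M) / M) + (1 - t) * (ln M + (v - M) / M)"
    using tangent[OF uv(1)] tangent[OF uv(2)] tangent_less[OF uv(1)] tangent_less[OF uv(2)] t
    by (auto intro: add_less_le_mono add_le_less_mono mult_strict_left_mono mult_left_mono)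
  also have "\<dots> = ln M + (t * u + (1 - t) * v - M) / M"
    using M by (simp add: field_simps)
  also have "\<dots> = ln M"
    by (simp add: M_def)
  finally show ?thesis
    by (simp add: M_def)
qed

lemma Youngs_inequality_strict:
  fixes p q a b :: real
  assumes pq: "p > 1" "q > 1" "1/p + 1/q = 1" and ab: "0 \<le> a" "0 \<le> b"
    and neq: "a powr p \<noteq> b powr q"
  shows "a * b < a powr p / p + b powr q / q"
proof (cases "a = 0 \<or> b = 0")
  case True
  then show ?thesis
    using pq ab neq by auto
next
  case False
  with ab have a: "0 < a" and b: "0 < b" by auto
  have weights: "1 / q = 1 - 1 / p"
    using pq(3) by simp
  have "ln (a * b) < ln (1 / p * a powr p + (1 - 1 / p) * b powr q)"
    using ln_convex_combination_less[of "1 / p" "a powr p" "b powr q"] a b pq neq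
    by (simp add: ln_mult ln_powr flip: weights)
  then have "a * b < 1 / p * a powr p + 1 / q * b powr q"
    using a b pq unfolding weights by (simp add: ln_less_cancel_iff add_pos_pos)
  then show ?thesis
    by simp
qed

definition lpnorm_on :: "'i set \<Rightarrow> real \<Rightarrow> ('i \<Rightarrow> real) \<Rightarrow> real" where
  "lpnorm_on A p f = (\<Sum>i\<in>A. \<bar>f i\<bar> powr p) powr (1 / p)"

lemma lpnorm_on_nonneg: "0 \<le> lpnorm_on A p f"
  by (simp add: lpnorm_on_def)

lemma lpnorm_on_powr: "0 < p \<Longrightarrow> lpnorm_on A p f powr p = (\<Sum>i\<in>A. \<bar>f i\<bar> powr p)"
  by (simp add: lpnorm_on_def powr_powr sum_nonneg)

lemma lpnorm_on_eq_0_iff: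
  assumes "finite A" "0 < p"
  shows "lpnorm_on A p f = 0 \<longleftrightarrow> (\<forall>i\<in>A. f i = 0)"
  using assms by (simp add: lpnorm_on_def sum_nonneg_eq_0_iff)

lemma lpnorm_on_scale:
  assumes "0 < p"
  shows "lpnorm_on A p (\<lambda>i. c * f i) = \<bar>c\<bar> * lpnorm_on A p f"
  using assms
  by (simp add: lpnorm_on_def abs_mult powr_mult sum_distrib_left[symmetric] powr_powr sum_nonneg)

lemma Holder_inequality_normalized:
  fixes a b :: "'i \<Rightarrow> real"
  assumes "finite A" and pq: "p > 1" "q > 1" "1/p + 1/q = 1"
    and nonneg: "\<And>i. i \<in> A \<Longrightarrow> 0 \<le> a i" "\<And>i. i \<in> A \<Longrightarrow> 0 \<le> b i"
    and normed: "(\<Sum>i\<in>A. a i powr p) = 1" "(\<Sum>i\<in>A. b i powr q) = 1"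
  shows "(\<Sum>i\<in>A. a i * b i) \<le> 1"
    and "(\<Sum>i\<in>A. a i * b i) = 1 \<Longrightarrow> i \<in> A \<Longrightarrow> a i powr p = b i powr q"
proof -
  define gap where "gap i = a i powr p / p + b i powr q / q - a i * b i" for i
  have gap_nonneg: "0 \<le> gap i" if "i \<in> A" for i
    using Youngs_inequality[OF pq nonneg[OF that]] by (simp add: gap_def)
  have sum_gap: "(\<Sum>i\<in>A. gap i) = 1 - (\<Sum>i\<in>A. a i * b i)"
    using normed pq(3)
    by (simp add: gap_def sum_subtractf sum.distrib flip: sum_divide_distrib)
  show "(\<Sum>i\<in>A. a i * b i) \<le> 1"
    using sum_nonneg[of A gap] gap_nonneg sum_gap by simp
  assume "(\<Sum>i\<in>A. a i * b i) = 1" "i \<in> A"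
  then have "gap i = 0"
    using sum_nonneg_eq_0_iff[OF \<open>finite A\<close>, of gap] gap_nonneg sum_gap by simp
  then show "a i powr p = b i powr q"
    using Youngs_inequality_strict[OF pq nonneg[OF \<open>i \<in> A\<close>]] by (force simp: gap_def)
qed

lemma sum_normalized_powr_eq_1:
  assumes "0 < p" "0 < lpnorm_on A p f"
  shows "(\<Sum>i\<in>A. (\<bar>f i\<bar> / lpnorm_on A p f) powr p) = 1"
proof -
  have "(\<Sum>i\<in>A. (\<bar>f i\<bar> / lpnorm_on A p f) powr p) = (\<Sum>i\<in>A. \<bar>f i\<bar> powr p) / lpnorm_on A p f powr p"
    using assms by (simp add: powr_divide lpnorm_on_nonneg sum_divide_distrib)
  moreover have "(\<Sum>i\<in>A. \<bar>f i\<bar> powr p) \<noteq> 0"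
    using assms(2) by (auto simp: lpnorm_on_def)
  ultimately show ?thesis
    using assms by (simp add: lpnorm_on_powr)
qed

lemma sum_abs_mult_eq_normalized:
  fixes f g :: "'i \<Rightarrow> real"
  assumes "0 < F" "0 < G"
  shows "(\<Sum>i\<in>A. \<bar>f i * g i\<bar>) = F * G * (\<Sum>i\<in>A. (\<bar>f i\<bar> / F) * (\<bar>g i\<bar> / G))"
  by (subst sum_distrib_left) (use assms in \<open>simp add: abs_mult\<close>)

lemma Holder_inequality_finite:
  assumes "finite A" and pq: "p > 1" "q > 1" "1/p + 1/q = 1"
  shows "(\<Sum>i\<in>A. \<bar>f i * g i\<bar>) \<le> lpnorm_on A p f * lpnorm_on A q g"
proof (cases "lpnorm_on A p f = 0 \<or> lpnorm_on A q g = 0")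
  case True
  then have "\<forall>i\<in>A. f i * g i = 0"
    using lpnorm_on_eq_0_iff[OF \<open>finite A\<close>] pq by auto
  then have "(\<Sum>i\<in>A. \<bar>f i * g i\<bar>) = 0"
    by (intro sum.neutral) simp
  then show ?thesis
    by (simp add: lpnorm_on_nonneg)
next
  case False
  then have F: "0 < lpnorm_on A p f" and G: "0 < lpnorm_on A q g"
    using lpnorm_on_nonneg less_eq_real_def by auto
  have "(\<Sum>i\<in>A. (\<bar>f i\<bar> / lpnorm_on A p f) * (\<bar>g i\<bar> / lpnorm_on A q g)) \<le> 1"
    using pq F G
    by (intro Holder_inequality_normalized(1)[OF \<open>finite A\<close> pq] sum_normalized_powr_eq_1) auto
  then show ?thesis
    unfolding sum_abs_mult_eq_normalized[OF F G] using F G by simp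
qed

lemma Holder_inequality_finite_eq:
  assumes "finite A" and pq: "p > 1" "q > 1" "1/p + 1/q = 1"
    and F: "0 < lpnorm_on A p f" and G: "0 < lpnorm_on A q g"
    and eq: "(\<Sum>i\<in>A. \<bar>f i * g i\<bar>) = lpnorm_on A p f * lpnorm_on A q g" and "i \<in> A"
  shows "(\<bar>f i\<bar> / lpnorm_on A p f) powr p = (\<bar>g i\<bar> / lpnorm_on A q g) powr q"
proof (rule Holder_inequality_normalized(2)[OF \<open>finite A\<close> pq _ _ _ _ _ \<open>i \<in> A\<close>])
  show "(\<Sum>i\<in>A. (\<bar>f i\<bar> / lpnorm_on A p f) * (\<bar>g i\<bar> / lpnorm_on A q g)) = 1"
    using eq F G unfolding sum_abs_mult_eq_normalized[OF F G] by simp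
qed (use pq F G sum_normalized_powr_eq_1[of p A f] sum_normalized_powr_eq_1[of q A g] in auto)

definition lp_dual :: "'i set \<Rightarrow> real \<Rightarrow> ('i \<Rightarrow> real) \<Rightarrow> 'i \<Rightarrow> real" where
  "lp_dual A q d i = d i powr (q - 1) / lpnorm_on A q d powr (q - 1)"

lemma
  fixes d :: "'i \<Rightarrow> real"
  assumes "finite A" and pq: "p > 1" "q > 1" "1/p + 1/q = 1"
    and d_nonneg: "\<And>i. i \<in> A \<Longrightarrow> 0 \<le> d i" and N: "0 < lpnorm_on A q d"
  shows lpnorm_on_lp_dual: "lpnorm_on A p (lp_dual A q d) = 1"
    and sum_mult_lp_dual: "(\<Sum>i\<in>A. d i * lp_dual A q d i) = lpnorm_on A q d"
proof -
  let ?N = "lpnorm_on A q d"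
  have qp: "(q - 1) * p = q"
    using pq by (simp add: field_simps)
  have "\<bar>lp_dual A q d i\<bar> powr p = (\<bar>d i\<bar> / ?N) powr q" if "i \<in> A" for i
    using d_nonneg[OF that] N by (simp add: lp_dual_def powr_divide powr_powr qp)
  then have "(\<Sum>i\<in>A. \<bar>lp_dual A q d i\<bar> powr p) = 1"
    using sum_normalized_powr_eq_1[of q A d] pq N by simp
  then show "lpnorm_on A p (lp_dual A q d) = 1"
    by (simp add: lpnorm_on_def)
  have "d i * lp_dual A q d i = d i powr q / ?N powr (q - 1)" if "i \<in> A" for i
  proof (cases "d i = 0")
    case False
    then show ?thesis
      using d_nonneg[OF that] by (simp add: lp_dual_def powr_mult_base)
  qed (simp add: lp_dual_def)
  then have "(\<Sum>i\<in>A. d i * lp_dual A q d i) = ?N powr q / ?N powr (q - 1)"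
    using pq d_nonneg by (simp add: lpnorm_on_powr sum_divide_distrib)
  also have "\<dots> = ?N"
    using N by (simp add: powr_diff)
  finally show "(\<Sum>i\<in>A. d i * lp_dual A q d i) = ?N" .
qed

lemma lp_ball_inner_ge:
  assumes "finite A" and pq: "p > 1" "q > 1" "1/p + 1/q = 1"
    and D: "lpnorm_on A p D \<le> \<alpha>"
  shows "- (\<alpha> * lpnorm_on A q d) \<le> (\<Sum>i\<in>A. d i * D i)"
proof -
  have "- (\<alpha> * lpnorm_on A q d) \<le> - (lpnorm_on A p D * lpnorm_on A q d)"
    using D lpnorm_on_nonneg[of A q d] by (simp add: mult_right_mono)
  also have "\<dots> \<le> - (\<Sum>i\<in>A. \<bar>D i * d i\<bar>)"
    using Holder_inequality_finite[OF assms(1-4)] by simp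
  also have "\<dots> \<le> (\<Sum>i\<in>A. d i * D i)"
    by (simp add: sum_negf[symmetric] sum_mono mult.commute)
  finally show ?thesis .
qed

lemma abs_eq_lp_dual_of_Holder_eq:
  fixes d D :: "'i \<Rightarrow> real"
  assumes "finite A" and pq: "p > 1" "q > 1" "1/p + 1/q = 1"
    and d_nonneg: "\<And>i. i \<in> A \<Longrightarrow> 0 \<le> d i" and N: "0 < lpnorm_on A q d"
    and \<alpha>: "0 < \<alpha>" and F: "lpnorm_on A p D = \<alpha>"
    and eq: "(\<Sum>i\<in>A. \<bar>D i * d i\<bar>) = \<alpha> * lpnorm_on A q d" and "i \<in> A"
  shows "\<bar>D i\<bar> = \<alpha> * lp_dual A q d i"
proof -
  let ?N = "lpnorm_on A q d"
  have Holder_eq: "(\<bar>D i\<bar> / \<alpha>) powr p = (d i / ?N) powr q"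
    using Holder_inequality_finite_eq[OF assms(1-4), of D d] F \<alpha> N eq \<open>i \<in> A\<close> d_nonneg
    by simp
  have "\<bar>D i\<bar> / \<alpha> = ((\<bar>D i\<bar> / \<alpha>) powr p) powr (1 / p)"
    using pq \<alpha> by (simp add: powr_powr)
  also have "\<dots> = (d i / ?N) powr (q * (1 / p))"
    unfolding Holder_eq by (simp add: powr_powr)
  also have "q * (1 / p) = q - 1"
    using pq by (simp add: field_simps)
  also have "(d i / ?N) powr (q - 1) = lp_dual A q d i"
    using d_nonneg[OF \<open>i \<in> A\<close>] N by (simp add: powr_divide lp_dual_def)
  finally show ?thesis
    using \<alpha> by (simp add: field_simps)
qed

lemma lp_ball_inner_min_unique:
  fixes d D :: "'i \<Rightarrow> real"
  assumes "finite A" and pq: "p > 1" "q > 1" "1/p + 1/q = 1"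
    and d_nonneg: "\<And>i. i \<in> A \<Longrightarrow> 0 \<le> d i" and N: "0 < lpnorm_on A q d"
    and \<alpha>: "0 < \<alpha>" and D: "lpnorm_on A p D \<le> \<alpha>"
    and min: "(\<Sum>i\<in>A. d i * D i) \<le> - (\<alpha> * lpnorm_on A q d)"
    and "i \<in> A"
  shows "D i = - (\<alpha> * lp_dual A q d i)"
proof -
  let ?N = "lpnorm_on A q d" and ?F = "lpnorm_on A p D"
  have lower: "- (\<Sum>i\<in>A. \<bar>D i * d i\<bar>) \<le> (\<Sum>i\<in>A. d i * D i)"
    by (simp add: sum_negf[symmetric] sum_mono mult.commute)
  have Holder: "(\<Sum>i\<in>A. \<bar>D i * d i\<bar>) \<le> ?F * ?N"
    by (rule Holder_inequality_finite[OF assms(1-4)])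
  have FN: "?F * ?N \<le> \<alpha> * ?N"
    using D N by (simp add: mult_right_mono)
  have sum_abs: "(\<Sum>i\<in>A. \<bar>D i * d i\<bar>) = \<alpha> * ?N" and "?F * ?N = \<alpha> * ?N"
    using lower Holder FN min by linarith+
  then have "?F = \<alpha>"
    using N by simp
  from abs_eq_lp_dual_of_Holder_eq[OF assms(1-7) this sum_abs \<open>i \<in> A\<close>]
  have abs_D: "\<bar>D i\<bar> = \<alpha> * lp_dual A q d i" .
  have "(\<Sum>j\<in>A. \<bar>D j * d j\<bar> + d j * D j) = 0"
    using lower Holder FN min by (simp add: sum.distrib)
  moreover have "0 \<le> \<bar>D j * d j\<bar> + d j * D j" for j
    using abs_ge_minus_self[of "D j * d j"] by (simp add: mult.commute)
  ultimately have "\<bar>D i * d i\<bar> + d i * D i = 0"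
    using sum_nonneg_eq_0_iff[OF \<open>finite A\<close>, of "\<lambda>j. \<bar>D j * d j\<bar> + d j * D j"] \<open>i \<in> A\<close>
    by simp
  then have sign: "d i * (\<bar>D i\<bar> + D i) = 0"
    using d_nonneg[OF \<open>i \<in> A\<close>] by (simp add: abs_mult algebra_simps)
  show ?thesis
  proof (cases "d i = 0")
    case True
    then show ?thesis
      using abs_D by (simp add: lp_dual_def)
  next
    case False
    with sign abs_D show ?thesis
      by simp
  qed
qed

section \<open>The robust evaluation operator\<close>

lemma stochastic_trans_pol:
  assumes "\<And>s a s'. 0 \<le> P s a s'" "\<And>s a. (\<Sum>s'\<in>UNIV. P s a s') = 1"
    and "\<And>s a. 0 \<le> pol s a" "\<And>s. (\<Sum>a\<in>UNIV. pol s a) = 1"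
  shows "stochastic (trans_pol pol P)"
proof -
  have "(\<Sum>s'\<in>UNIV. \<Sum>a\<in>UNIV. pol s a * P s a s') = (\<Sum>a\<in>UNIV. pol s a * (\<Sum>s'\<in>UNIV. P s a s'))" for s
    by (simp add: sum_distrib_left) (rule sum.swap)
  then show ?thesis
    using assms by (auto simp: stochastic_def trans_pol_def intro!: sum_nonneg)
qed

lemma bellman_diff:
  "bellman \<gamma> P pol R x - bellman \<gamma> P pol R y = \<gamma> *\<^sub>R (trans_pol pol P *v (x - y))"
  unfolding bellman_def by (simp add: matrix_vector_mult_diff_distrib algebra_simps)

lemma supnorm_bellman_diff_le:
  assumes "stochastic (trans_pol pol P)" "0 \<le> \<gamma>"
  shows "supnorm (bellman \<gamma> P pol R x - bellman \<gamma> P pol R y) \<le> \<gamma> * supnorm (x - y)"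
proof -
  have "supnorm (\<gamma> *\<^sub>R (trans_pol pol P *v (x - y))) \<le> \<gamma> * supnorm (trans_pol pol P *v (x - y))"
    using supnorm_scaleR_le[of \<gamma>] assms(2) by simp
  also have "\<dots> \<le> \<gamma> * supnorm (x - y)"
    using supnorm_stochastic_mult_le[OF assms(1)] assms(2) by (rule mult_left_mono)
  finally show ?thesis
    unfolding bellman_diff .
qed

lemma bellman_value_fun:
  assumes "stochastic (trans_pol pol P)" "0 \<le> \<gamma>" "\<gamma> < 1"
  shows "bellman \<gamma> P pol R (value_fun \<gamma> P pol R) = value_fun \<gamma> P pol R"
proof -
  let ?B = "mat 1 - \<gamma> *\<^sub>R trans_pol pol P"
  have "?B *v value_fun \<gamma> P pol R = reward_pol pol R"
    using matrix_inv_invertible(1)[OF invertible_discounted_stochastic[OF assms]]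
    by (simp add: value_fun_def matrix_vector_mul_assoc)
  then show ?thesis
    by (simp add: bellman_def matrix_vector_mult_diff_rdistrib scaleR_matrix_vector_assoc
        algebra_simps)
qed

lemma occ_state_ge:
  assumes "stochastic (trans_pol pol P)" "0 \<le> \<gamma>" "\<gamma> < 1" "\<And>s. 0 \<le> \<mu> s"
  shows "\<mu> s \<le> occ_state \<gamma> P \<mu> pol $ s"
proof -
  have "occ_state \<gamma> P \<mu> pol v* (mat 1 - \<gamma> *\<^sub>R trans_pol pol P) = (\<chi> s. \<mu> s)"
    using matrix_inv_invertible(2)[OF invertible_discounted_stochastic[OF assms(1-3)]]
    by (simp add: occ_state_def vector_matrix_mul_assoc)
  from discounted_left_solution_ge[OF assms(1-3) this] assms(4) show ?thesis
    by simp
qed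

lemma lpnorm_eq_lpnorm_on: "lpnorm p f = lpnorm_on UNIV p (case_prod f)"
  by (simp add: lpnorm_def lpnorm_on_def sum.cartesian_product case_prod_beta')

lemma ret_eq_add_sum_prod:
  "ret \<gamma> P \<mu> pol R
     = ret \<gamma> P \<mu> pol R0 + (\<Sum>x\<in>UNIV. case_prod (occ \<gamma> P \<mu> pol) x * case_prod (\<lambda>s a. R s a - R0 s a) x)"
  by (simp add: ret_def sum.cartesian_product split_def right_diff_distrib sum_subtractf)

lemma mem_Rball_iff: "R \<in> Rball p R0 \<alpha> \<longleftrightarrow> lpnorm_on UNIV p (case_prod (\<lambda>s a. R s a - R0 s a)) \<le> \<alpha>"
  by (simp add: Rball_def lpnorm_eq_lpnorm_on)

lemma worst_reward_argmin_iff: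
  fixes P :: "'s::finite \<Rightarrow> 'a::finite \<Rightarrow> 's \<Rightarrow> real" and R0 :: "'s \<Rightarrow> 'a \<Rightarrow> real"
  assumes p: "1 < p" and \<alpha>: "0 < \<alpha>"
    and occ_nonneg: "\<And>s a. 0 \<le> occ \<gamma> P \<mu> pol s a" and occ_pos: "0 < occ \<gamma> P \<mu> pol s0 a0"
  defines "q \<equiv> p / (p - 1)"
  defines "Rs \<equiv> \<lambda>s a. R0 s a - \<alpha> * lp_dual UNIV q (case_prod (occ \<gamma> P \<mu> pol)) (s, a)"
  shows "R \<in> Rball p R0 \<alpha> \<and> (\<forall>R'\<in>Rball p R0 \<alpha>. ret \<gamma> P \<mu> pol R \<le> ret \<gamma> P \<mu> pol R') \<longleftrightarrow> R = Rs"
proof -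
  define d where "d = case_prod (occ \<gamma> P \<mu> pol)"
  define D where "D R = case_prod (\<lambda>s a. R s a - R0 s a)" for R :: "'s \<Rightarrow> 'a \<Rightarrow> real"
  let ?N = "lpnorm_on UNIV q d"
  have ret_D: "ret \<gamma> P \<mu> pol R = ret \<gamma> P \<mu> pol R0 + (\<Sum>x\<in>UNIV. d x * D R x)" for R
    unfolding d_def D_def by (rule ret_eq_add_sum_prod)
  have Rball_D: "R \<in> Rball p R0 \<alpha> \<longleftrightarrow> lpnorm_on UNIV p (D R) \<le> \<alpha>" for R
    unfolding D_def by (rule mem_Rball_iff)
  have pq: "q > 1" "1/p + 1/q = 1"
    using p by (simp_all add: q_def field_simps)
  have d_nonneg: "0 \<le> d x" for x
    using occ_nonneg by (simp add: d_def split: prod.split)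
  have N: "0 < ?N"
    using lpnorm_on_eq_0_iff[of UNIV q d] lpnorm_on_nonneg[of UNIV q d] occ_pos pq
    by (force simp: d_def)
  have D_Rs: "D Rs = (\<lambda>x. - \<alpha> * lp_dual UNIV q d x)"
    by (simp add: D_def Rs_def d_def fun_eq_iff split: prod.split)
  have Rs_ball: "Rs \<in> Rball p R0 \<alpha>"
    using lpnorm_on_lp_dual[OF _ p pq d_nonneg N] lpnorm_on_scale[of p UNIV "- \<alpha>" "lp_dual UNIV q d"] p \<alpha>
    by (simp add: Rball_D D_Rs)
  have ret_Rs: "ret \<gamma> P \<mu> pol Rs = ret \<gamma> P \<mu> pol R0 - \<alpha> * ?N"
    using sum_mult_lp_dual[OF _ p pq d_nonneg N]
    by (simp add: ret_D[of Rs] D_Rs mult.left_commute sum_negf flip: sum_distrib_left)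
  have ret_ge: "ret \<gamma> P \<mu> pol Rs \<le> ret \<gamma> P \<mu> pol R" if "R \<in> Rball p R0 \<alpha>" for R
    using lp_ball_inner_ge[of UNIV p q "D R" \<alpha> d, OF _ p pq] that
    by (simp add: Rball_D ret_D[of R] ret_Rs)
  have unique: "R = Rs" if "R \<in> Rball p R0 \<alpha>" "ret \<gamma> P \<mu> pol R \<le> ret \<gamma> P \<mu> pol Rs" for R
  proof -
    have "D R x = D Rs x" for x
      using lp_ball_inner_min_unique[OF _ p pq d_nonneg N \<alpha>] that
      by (simp add: Rball_D ret_D[of R] ret_Rs D_Rs)
    from this[of "(s, a)" for s a] show ?thesis
      by (simp add: D_def fun_eq_iff)
  qed
  show ?thesis
    using Rs_ball ret_ge unique by (blast intro: order_trans)
qed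

lemma worst_reward_eq:
  fixes P :: "'s::finite \<Rightarrow> 'a::finite \<Rightarrow> 's \<Rightarrow> real"
  assumes "1 < p" "0 < \<alpha>" "\<And>s a. 0 \<le> occ \<gamma> P \<mu> pol s a" "0 < occ \<gamma> P \<mu> pol s0 a0"
  shows "worst_reward \<gamma> P \<mu> pol p R0 \<alpha>
           = (\<lambda>s a. R0 s a - \<alpha> * lp_dual UNIV (p / (p - 1)) (case_prod (occ \<gamma> P \<mu> pol)) (s, a))"
  unfolding worst_reward_def worst_reward_argmin_iff[OF assms] by simp

lemma reg_bellman_eq_bellman_worst_reward:
  fixes P :: "'s::finite \<Rightarrow> 'a::finite \<Rightarrow> 's \<Rightarrow> real"
  assumes "1 < p" "0 < \<alpha>" "\<And>s a. 0 \<le> occ \<gamma> P \<mu> pol s a" "0 < occ \<gamma> P \<mu> pol s0 a0"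
  shows "reg_bellman \<gamma> P \<mu> pol p R0 \<alpha> v = bellman \<gamma> P pol (worst_reward \<gamma> P \<mu> pol p R0 \<alpha>) v"
proof -
  define q where "q = p / (p - 1)"
  define d where "d = occ \<gamma> P \<mu> pol"
  have "pol s a * (R0 s a - \<alpha> * lp_dual UNIV q (case_prod d) (s, a))
      = pol s a * R0 s a - \<alpha> * (pol s a * d s a powr (q - 1)) / lpnorm q d powr (q - 1)" for s a
    by (simp add: lp_dual_def lpnorm_eq_lpnorm_on right_diff_distrib)
  then have "(\<Sum>a\<in>UNIV. pol s a * (R0 s a - \<alpha> * lp_dual UNIV q (case_prod d) (s, a)))
      = (\<Sum>a\<in>UNIV. pol s a * R0 s a)
        - \<alpha> * (\<Sum>a\<in>UNIV. pol s a * d s a powr (q - 1)) / lpnorm q d powr (q - 1)" for s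
    by (simp add: sum_subtractf sum_distrib_left sum_divide_distrib)
  then show ?thesis
    unfolding worst_reward_eq[OF assms] reg_bellman_def bellman_def reward_pol_def Let_def
      q_def[symmetric] d_def[symmetric]
    by (simp add: vec_eq_iff)
qed

lemma occ_nonneg:
  assumes "stochastic (trans_pol pol P)" "0 \<le> \<gamma>" "\<gamma> < 1"
    and "\<And>s. 0 \<le> \<mu> s" "\<And>s a. 0 \<le> pol s a"
  shows "0 \<le> occ \<gamma> P \<mu> pol s a"
proof -
  have "0 \<le> occ_state \<gamma> P \<mu> pol $ s"
    using occ_state_ge[where \<mu> = \<mu> and s = s, OF assms(1-4)] assms(4)[of s] by linarith
  then show ?thesis
    using assms(5) by (simp add: occ_def)
qed

lemma ex_occ_pos:
  assumes "stochastic (trans_pol pol P)" "0 \<le> \<gamma>" "\<gamma> < 1"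
    and "\<And>s. 0 < \<mu> s" "\<And>s a. 0 \<le> pol s a" "\<And>s. (\<Sum>a\<in>UNIV. pol s a) = 1"
  shows "\<exists>a. 0 < occ \<gamma> P \<mu> pol s a"
proof -
  obtain a where "0 < pol s a"
    using assms(5,6)[of s] by (metis less_eq_real_def sum.neutral zero_neq_one)
  moreover have "0 < occ_state \<gamma> P \<mu> pol $ s"
    using occ_state_ge[where \<mu> = \<mu> and s = s, OF assms(1-3)] assms(4) less_imp_le
    by (metis order_less_le_trans)
  ultimately have "0 < occ \<gamma> P \<mu> pol s a"
    by (simp add: occ_def)
  then show ?thesis ..
qed

theorem theorem2:
  fixes P :: "'s::finite \<Rightarrow> 'a::finite \<Rightarrow> 's \<Rightarrow> real"
    and pol :: "'s \<Rightarrow> 'a \<Rightarrow> real"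
    and \<mu> :: "'s \<Rightarrow> real"
    and R0 :: "'s \<Rightarrow> 'a \<Rightarrow> real"
    and \<gamma> p \<alpha> :: real
    and v :: "nat \<Rightarrow> real^'s"
  assumes P_nonneg: "\<And>s a s'. P s a s' \<ge> 0"
    and P_sum: "\<And>s a. (\<Sum>s'\<in>UNIV. P s a s') = 1"
    and pol_nonneg: "\<And>s a. pol s a \<ge> 0"
    and pol_sum: "\<And>s. (\<Sum>a\<in>UNIV. pol s a) = 1"
    and mu_pos: "\<And>s. \<mu> s > 0"
    and mu_sum: "(\<Sum>s\<in>UNIV. \<mu> s) = 1"
    and gamma: "0 \<le> \<gamma>" "\<gamma> < 1"
    and p: "1 < p"
    and alpha: "\<alpha> > 0"
    and iter: "\<And>n. v (Suc n) = reg_bellman \<gamma> P \<mu> pol p R0 \<alpha> (v n)"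
  shows "(\<exists>c. 0 \<le> c \<and> c < 1 \<and>
           (\<forall>n. supnorm (v (Suc n) - robust_value \<gamma> P \<mu> pol p R0 \<alpha>)
                 \<le> c * supnorm (v n - robust_value \<gamma> P \<mu> pol p R0 \<alpha>))) \<and>
         v \<longlonglongrightarrow> robust_value \<gamma> P \<mu> pol p R0 \<alpha>"
proof -
  have T: "stochastic (trans_pol pol P)"
    by (rule stochastic_trans_pol[OF P_nonneg P_sum pol_nonneg pol_sum])
  have occ_nonneg: "0 \<le> occ \<gamma> P \<mu> pol s a" for s a
    using occ_nonneg[where \<mu> = \<mu>, OF T gamma _ pol_nonneg] mu_pos less_imp_le by blast
  obtain s0 a0 where occ_pos: "0 < occ \<gamma> P \<mu> pol s0 a0"
    using ex_occ_pos[where \<mu> = \<mu>, OF T gamma mu_pos pol_nonneg pol_sum] by blast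
  let ?W = "worst_reward \<gamma> P \<mu> pol p R0 \<alpha>"
  define V where "V = robust_value \<gamma> P \<mu> pol p R0 \<alpha>"
  have V_fix: "bellman \<gamma> P pol ?W V = V"
    unfolding V_def robust_value_def by (rule bellman_value_fun[OF T gamma])
  have contr: "supnorm (v (Suc n) - V) \<le> \<gamma> * supnorm (v n - V)" for n
    using supnorm_bellman_diff_le[OF T gamma(1), of ?W "v n" V]
    unfolding iter reg_bellman_eq_bellman_worst_reward[OF p alpha occ_nonneg occ_pos] V_fix .
  show ?thesis
    unfolding V_def[symmetric]
    using gamma contr tendsto_of_supnorm_contraction[where v = v, OF gamma contr] by blast
qed

end
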